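(* Let $p\in(1,\infty)$ and let $s\ge 2$ be an integer. For an integer $b$ with $0\le b\le s$, let $f(b)=\min_{c\in\mathbb{R}}\big((s-b)|c|^p+b|1-c|^p\big)$, the contribution to the $\operatorname{dist}_p$-cost of a cluster of $s$ vectors with entries in $\{0,1\}$ from a coordinate in which exactly $b$ of the vectors have value $1$ and $s-b$ have value $0$. Then $f(b)/b$ is strictly decreasing in $b$ for $0<b<s$.
   Context: For $p>0$, $\operatorname{dist}_p(x,y)=\sum_{i=1}^d|x[i]-y[i]|^p$; the cost of a cluster $C$ is $\min_{c\in\mathbb{R}^d}\sum_{x\in C}\operatorname{dist}_p(x,c)$, which decomposes as a sum over coordinates of the optimal one-dimensional contributions. *)

theory Defs
  imports "HOL-Analysis.Analysis"
begin

text \<open>One-coordinate contribution to the dist_p cost of a cluster of s binary vectors,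
  b of which have value 1 in that coordinate: min over c of (s-b)|c|^p + b|1-c|^p.
  The minimum is attained, so it coincides with the infimum.\<close>
definition coord_cost :: "real \<Rightarrow> nat \<Rightarrow> nat \<Rightarrow> real" where
  "coord_cost p s b = (INF c::real. real (s - b) * \<bar>c\<bar> powr p + real b * \<bar>1 - c\<bar> powr p)"

end

theory Submission
  imports Defs
begin

text \<open>Dividing by \<open>b\<close>, \<open>f(b)/b\<close> is the minimum over \<open>c\<close> of \<open>r |c|^p + |1 - c|^p\<close> with weight
  \<open>r = (s - b)/b\<close>, which strictly decreases in \<open>b\<close>. For \<open>p > 1\<close> the minimiser is never \<open>c = 0\<close>:
  moving \<open>c\<close> slightly away from \<open>0\<close> lowers \<open>|1 - c|^p\<close> to first order but raises \<open>|c|^p\<close> only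
  to order \<open>p\<close>. Hence the term \<open>r |c|^p\<close> at the minimiser is positive, and lowering \<open>r\<close>
  strictly lowers the minimum.\<close>

definition binary_cost :: "real \<Rightarrow> real \<Rightarrow> real \<Rightarrow> real \<Rightarrow> real" where
  "binary_cost p a b c = a * \<bar>c\<bar> powr p + b * \<bar>1 - c\<bar> powr p"

definition min_binary_cost :: "real \<Rightarrow> real \<Rightarrow> real \<Rightarrow> real" where
  "min_binary_cost p a b = (INF c. binary_cost p a b c)"

lemma coord_cost_eq_min_binary_cost:
  "coord_cost p s b = min_binary_cost p (real (s - b)) (real b)"
  by (simp add: coord_cost_def min_binary_cost_def binary_cost_def)

lemma binary_cost_nonneg: "0 \<le> a \<Longrightarrow> 0 \<le> b \<Longrightarrow> 0 \<le> binary_cost p a b c"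
  by (simp add: binary_cost_def)

lemma binary_cost_at_0: "binary_cost p a b 0 = b"
  by (simp add: binary_cost_def)

lemma binary_cost_scale: "binary_cost p (t * a) (t * b) c = t * binary_cost p a b c"
  by (simp add: binary_cost_def algebra_simps)

lemma binary_cost_attains_min:
  assumes p: "0 < p" and a: "0 \<le> a" and b: "0 \<le> b"
  obtains c0 where "\<And>c. binary_cost p a b c0 \<le> binary_cost p a b c"
proof -
  let ?h = "binary_cost p a b"
  have "continuous_on {0..1} ?h"
    unfolding binary_cost_def using p by (intro continuous_intros continuous_on_powr') auto
  then obtain c0 where "\<forall>c\<in>{0..1}. ?h c0 \<le> ?h c"
    using continuous_attains_inf[of "{0..1::real}" ?h] by auto
  then have min01: "\<And>c. c \<in> {0..1} \<Longrightarrow> ?h c0 \<le> ?h c" by blast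
  have "?h c0 \<le> ?h c" for c
  proof -
    consider "c < 0" | "c \<in> {0..1}" | "1 < c" by fastforce
    then show ?thesis
    proof cases
      case 1
      have "1 \<le> \<bar>1 - c\<bar> powr p"
        using 1 p powr_mono2[of p 1 "\<bar>1 - c\<bar>"] by auto
      then have "b * 1 \<le> b * \<bar>1 - c\<bar> powr p"
        using b by (rule mult_left_mono)
      then have "?h 0 \<le> ?h c"
        using a by (simp add: binary_cost_def add_increasing)
      then show ?thesis using min01[of 0] by simp
    next
      case 2
      then show ?thesis by (rule min01)
    next
      case 3
      have "1 \<le> \<bar>c\<bar> powr p"
        using 3 p powr_mono2[of p 1 "\<bar>c\<bar>"] by auto
      then have "a * 1 \<le> a * \<bar>c\<bar> powr p"
        using a by (rule mult_left_mono)
      then have "?h 1 \<le> ?h c"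
        using b by (simp add: binary_cost_def add_increasing2)
      then show ?thesis using min01[of 1] by simp
    qed
  qed
  then show thesis by (rule that)
qed

lemma min_binary_cost_le:
  "0 \<le> a \<Longrightarrow> 0 \<le> b \<Longrightarrow> min_binary_cost p a b \<le> binary_cost p a b c"
  unfolding min_binary_cost_def
  by (rule cINF_lower) (auto intro: bdd_belowI2 binary_cost_nonneg)

lemma min_binary_cost_eq_minimum:
  "(\<And>c. binary_cost p a b c0 \<le> binary_cost p a b c) \<Longrightarrow>
    min_binary_cost p a b = binary_cost p a b c0"
  unfolding min_binary_cost_def by (rule cInf_eq_minimum) auto

lemma min_binary_cost_scale:
  assumes "0 < p" "0 \<le> a" "0 \<le> b" "0 < t"
  shows "min_binary_cost p (t * a) (t * b) = t * min_binary_cost p a b"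
proof -
  obtain c0 where c0: "\<And>c. binary_cost p a b c0 \<le> binary_cost p a b c"
    using binary_cost_attains_min assms(1-3) by blast
  have "\<And>c. binary_cost p (t * a) (t * b) c0 \<le> binary_cost p (t * a) (t * b) c"
    using c0 \<open>0 < t\<close> by (simp add: binary_cost_scale)
  then have "min_binary_cost p (t * a) (t * b) = binary_cost p (t * a) (t * b) c0"
    by (rule min_binary_cost_eq_minimum)
  also have "\<dots> = t * min_binary_cost p a b"
    using min_binary_cost_eq_minimum[OF c0] by (simp add: binary_cost_scale)
  finally show ?thesis .
qed

lemma binary_cost_less_weight:
  assumes p: "1 < p" and a: "0 < a" and b: "0 < b"
  obtains c where "binary_cost p a b c < b"
proof -
  define c where "c = min (1/2) ((b/a) powr (1/(p-1)))"
  have c: "0 < c" "c < 1" using a b by (auto simp: c_def)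
  have "c powr (p-1) \<le> ((b/a) powr (1/(p-1))) powr (p-1)"
    using p c by (intro powr_mono2) (auto simp: c_def)
  also have "\<dots> = b/a" using p a b by (simp add: powr_powr)
  finally have "c powr (p-1) \<le> b/a" .
  then have "c * c powr (p-1) \<le> c * (b/a)" using c by (intro mult_left_mono) auto
  moreover have "c powr p = c * c powr (p-1)"
    using c by (simp add: powr_mult_base)
  ultimately have "a * c powr p \<le> b * c" using a by (simp add: field_simps)
  moreover have "(1-c) powr p < (1-c) powr 1"
    using c p by (intro powr_less_mono') auto
  then have "b * (1-c) powr p < b * (1-c)" using b c by simp
  ultimately have "binary_cost p a b c < b"
    using c by (simp add: binary_cost_def algebra_simps)
  then show thesis by (rule that)
qed

lemma min_binary_cost_strict_mono:
  assumes p: "1 < p" and a: "0 \<le> a" "a < a'" and b: "0 < b"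
  shows "min_binary_cost p a b < min_binary_cost p a' b"
proof -
  have a': "0 < a'" using a by linarith
  obtain c0 where c0: "\<And>c. binary_cost p a' b c0 \<le> binary_cost p a' b c"
    using binary_cost_attains_min[of p a' b] p a' b by auto
  obtain c where "binary_cost p a' b c < b"
    using binary_cost_less_weight[OF p a' b] .
  then have "binary_cost p a' b c0 < binary_cost p a' b 0"
    using c0[of c] by (simp add: binary_cost_at_0)
  then have "c0 \<noteq> 0" by auto
  then have "a * \<bar>c0\<bar> powr p < a' * \<bar>c0\<bar> powr p"
    using a by simp
  then have "binary_cost p a b c0 < binary_cost p a' b c0"
    by (simp add: binary_cost_def)
  moreover have "min_binary_cost p a b \<le> binary_cost p a b c0"
    using a b by (intro min_binary_cost_le) auto
  ultimately show ?thesis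
    using min_binary_cost_eq_minimum[OF c0] by simp
qed

theorem claim12:
  fixes p :: real and s :: nat
  assumes "1 < p" and "2 \<le> s"
  shows "strict_antimono_on {b. 0 < b \<and> b < s} (\<lambda>b. coord_cost p s b / real b)"
proof (rule monotone_onI)
  have ratio: "coord_cost p s b / real b = min_binary_cost p (real (s - b) / b) 1"
    if "0 < b" "b < s" for b
  proof -
    have "coord_cost p s b = min_binary_cost p (real b * (real (s - b) / b)) (real b * 1)"
      using that by (simp add: coord_cost_eq_min_binary_cost of_nat_diff)
    also have "\<dots> = b * min_binary_cost p (real (s - b) / b) 1"
      using that \<open>1 < p\<close> by (intro min_binary_cost_scale) auto
    finally show ?thesis using that by simp
  qed
  fix b1 b2 assume b1: "b1 \<in> {b. 0 < b \<and> b < s}" and b2: "b2 \<in> {b. 0 < b \<and> b < s}"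
    and "b1 < b2"
  then have "real (s - b2) / b2 < real (s - b1) / b1"
    by (simp add: of_nat_diff field_simps)
  then show "coord_cost p s b2 / real b2 < coord_cost p s b1 / real b1"
    using b1 b2 ratio min_binary_cost_strict_mono[OF \<open>1 < p\<close>] by simp
qed

end
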